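(* Let $0<\alpha\le \frac12$. Then the Ces\`aro operator $\mathcal{C}$ is bounded on the Korenblum space $H^\infty_\alpha$, and its operator norm satisfies $$\|\mathcal{C}\|_{H^\infty_\alpha\to H^\infty_\alpha}=\frac{1}{\alpha}.$$
   Context: $\mathbb{D}$ is the open unit disc and $H(\mathbb{D})$ the space of analytic functions on $\mathbb{D}$. For $f(z)=\sum_{k\ge0}a_kz^k\in H(\mathbb{D})$ the Ces\`aro operator is $\mathcal{C}(f)(z)=\sum_{n\ge0}\Big(\frac{1}{n+1}\sum_{k=0}^n a_k\Big)z^n=\int_0^1\frac{f(tz)}{1-tz}\,dt$. For $0<\alpha<1$, the Korenblum space $H^\infty_\alpha$ consists of $f\in H(\mathbb{D})$ with $\|f\|_{H^\infty_\alpha}=\sup_{z\in\mathbb{D}}(1-|z|^2)^\alpha|f(z)|<\infty$. Operator norms are $\|\mathcal{C}\|_{X\to Y}=\sup\{\|\mathcal{C}f\|_Y:\|f\|_X\le 1\}$. *)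

theory Defs
  imports "HOL-Analysis.Analysis"
begin

definition korenblum_weighted :: "real \<Rightarrow> (complex \<Rightarrow> complex) \<Rightarrow> complex \<Rightarrow> real" where
  "korenblum_weighted \<alpha> f z = (1 - (cmod z)^2) powr \<alpha> * cmod (f z)"

definition in_korenblum :: "real \<Rightarrow> (complex \<Rightarrow> complex) \<Rightarrow> bool" where
  "in_korenblum \<alpha> f \<longleftrightarrow> f holomorphic_on ball 0 1 \<and>
     bdd_above (korenblum_weighted \<alpha> f ` ball 0 1)"

definition korenblum_norm :: "real \<Rightarrow> (complex \<Rightarrow> complex) \<Rightarrow> real" where
  "korenblum_norm \<alpha> f = (SUP z\<in>ball 0 1. korenblum_weighted \<alpha> f z)"

definition cesaro :: "(complex \<Rightarrow> complex) \<Rightarrow> complex \<Rightarrow> complex" where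
  "cesaro f z = integral {0..1} (\<lambda>t::real. f (of_real t * z) / (1 - of_real t * z))"

definition cesaro_norm_korenblum :: "real \<Rightarrow> real" where
  "cesaro_norm_korenblum \<alpha> =
     Sup {korenblum_norm \<alpha> (cesaro f) | f. in_korenblum \<alpha> f \<and> korenblum_norm \<alpha> f \<le> 1}"

end

theory Submission
  imports Defs "HOL-Complex_Analysis.Complex_Analysis" "HOL-Real_Asymp.Real_Asymp"
begin

text \<open>
  Write \<open>r = |z|\<close>. The Korenblum bound \<open>|f(tz)| \<le> \<parallel>f\<parallel> (1 - t\<^sup>2r\<^sup>2)\<^sup>-\<^sup>\<alpha>\<close> and
  \<open>|1 - tz| \<ge> 1 - tr\<close> bound the Cesaro integrand by \<open>\<parallel>f\<parallel> (1 - s\<^sup>2)\<^sup>-\<^sup>\<alpha> / (1 - s)\<close>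
  with \<open>s = tr\<close>. For \<open>\<alpha> \<le> 1/2\<close> this is dominated by \<open>\<parallel>f\<parallel>/\<alpha>\<close> times the
  \<open>t\<close>-derivative of \<open>t (1 - t\<^sup>2r\<^sup>2)\<^sup>-\<^sup>\<alpha>\<close>: after multiplying by \<open>(1 - s\<^sup>2)\<^sup>\<alpha>\<^sup>+\<^sup>1\<close>
  the difference is \<open>(1 - s)((1 - 2\<alpha>)s + 1 - \<alpha>) \<ge> 0\<close>. Integrating over \<open>[0,1]\<close>
  gives \<open>|Cf(z)| \<le> \<parallel>f\<parallel> (1 - r\<^sup>2)\<^sup>-\<^sup>\<alpha> / \<alpha>\<close>, i.e. \<open>\<parallel>Cf\<parallel> \<le> \<parallel>f\<parallel>/\<alpha>\<close>.
  Conversely \<open>f(z) = (2 - 2z)\<^sup>-\<^sup>\<alpha>\<close> has norm at most 1, and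
  \<open>Cf(r) = ((2 - 2r)\<^sup>-\<^sup>\<alpha> - 2\<^sup>-\<^sup>\<alpha>) / (\<alpha> r)\<close>, whose weighted value tends to \<open>1/\<alpha>\<close>
  as \<open>r \<rightarrow> 1\<close>; so the supremum defining the operator norm is attained and equals \<open>1/\<alpha>\<close>.
\<close>

lemma of_real_mult_mem_unit_ball:
  assumes "z \<in> ball (0::complex) 1" "t \<in> {0..1::real}"
  shows "of_real t * z \<in> ball 0 1"
  using assms mult_left_le_one_le[of "cmod z" t] by (auto simp: norm_mult)

lemma one_minus_nonzero_in_unit_ball: "w \<in> ball (0::complex) 1 \<Longrightarrow> 1 - w \<noteq> 0"
  by auto

lemma continuous_on_cesaro_integrand:
  fixes f :: "complex \<Rightarrow> complex"
  assumes "continuous_on (ball 0 1) f" "z \<in> ball 0 1"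
  shows "continuous_on {0..1} (\<lambda>t::real. f (of_real t * z) / (1 - of_real t * z))"
  using assms(2) of_real_mult_mem_unit_ball one_minus_nonzero_in_unit_ball
  by (intro continuous_intros continuous_on_compose2[OF assms(1)]) auto

lemma holomorphic_on_cesaro:
  assumes "f holomorphic_on ball 0 1"
  shows "cesaro f holomorphic_on ball 0 1"
proof -
  have f': "(f has_field_derivative deriv f w) (at w)" if "w \<in> ball 0 1" for w
    using assms that by (meson holomorphic_derivI open_ball)
  have cont: "continuous_on (ball 0 1) f" "continuous_on (ball 0 1) (deriv f)"
    using assms holomorphic_deriv holomorphic_on_imp_continuous_on by blast+
  define D where "D x t = (of_real t * deriv f (of_real t * x) * (1 - of_real t * x)
      + f (of_real t * x) * of_real t) / (1 - of_real t * x)^2" for x t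
  have "(\<lambda>x. integral (cbox 0 1) (\<lambda>t::real. f (of_real t * x) / (1 - of_real t * x)))
      holomorphic_on ball 0 1"
  proof (rule leibniz_rule_holomorphic[where fx=D])
    fix x :: complex and t :: real
    assume "x \<in> ball 0 1" "t \<in> cbox 0 1"
    then have "of_real t * x \<in> ball 0 1" "1 - of_real t * x \<noteq> 0"
      using of_real_mult_mem_unit_ball one_minus_nonzero_in_unit_ball by auto
    then show "((\<lambda>x. f (of_real t * x) / (1 - of_real t * x)) has_field_derivative D x t)
        (at x within ball 0 1)"
      unfolding D_def
      by (auto intro!: derivative_eq_intros DERIV_chain2[OF f'] simp: power2_eq_square field_simps)
  next
    fix x :: complex assume "x \<in> ball 0 1"
    then show "(\<lambda>t::real. f (of_real t * x) / (1 - of_real t * x)) integrable_on cbox 0 1"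
      using continuous_on_cesaro_integrand[OF cont(1)] integrable_continuous_interval by auto
  next
    show "continuous_on (ball 0 1 \<times> cbox 0 1) (\<lambda>(x, t). D x t)"
      unfolding D_def case_prod_unfold
      using of_real_mult_mem_unit_ball one_minus_nonzero_in_unit_ball
      by (intro continuous_intros continuous_on_compose2[OF cont(1)]
          continuous_on_compose2[OF cont(2)]) (auto simp: mem_Times_iff)
  qed auto
  then show ?thesis
    by (simp add: cesaro_def[abs_def])
qed

lemma korenblum_weighted_le_norm:
  assumes "in_korenblum a f" "z \<in> ball 0 1"
  shows "korenblum_weighted a f z \<le> korenblum_norm a f"
  using assms unfolding in_korenblum_def korenblum_norm_def by (intro cSUP_upper) auto

lemma korenblum_norm_nonneg: "in_korenblum a f \<Longrightarrow> 0 \<le> korenblum_norm a f"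
  using korenblum_weighted_le_norm[of a f 0]
  by (simp add: korenblum_weighted_def) (meson norm_ge_zero order_trans)

lemma norm_le_korenblum_norm:
  assumes "in_korenblum a f" "z \<in> ball 0 1"
  shows "cmod (f z) \<le> korenblum_norm a f * (1 - (cmod z)^2) powr (-a)"
proof -
  have "0 < 1 - (cmod z)^2"
    using assms(2) by (simp add: power_less_one_iff)
  then have "cmod (f z) = korenblum_weighted a f z * (1 - (cmod z)^2) powr (-a)"
    by (simp add: korenblum_weighted_def powr_minus)
  also have "\<dots> \<le> korenblum_norm a f * (1 - (cmod z)^2) powr (-a)"
    using korenblum_weighted_le_norm[OF assms] by (intro mult_right_mono) auto
  finally show ?thesis .
qed

lemma in_korenblum_norm_leI:
  assumes "f holomorphic_on ball 0 1" "\<And>z. z \<in> ball 0 1 \<Longrightarrow> korenblum_weighted a f z \<le> M"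
  shows "in_korenblum a f" "korenblum_norm a f \<le> M"
proof -
  show "in_korenblum a f"
    unfolding in_korenblum_def using assms by (metis bdd_aboveI2)
  show "korenblum_norm a f \<le> M"
    unfolding korenblum_norm_def using assms by (intro cSUP_least) auto
qed

text \<open>The derivative of \<open>s \<mapsto> s (1 - s\<^sup>2)\<^sup>-\<^sup>a / a\<close>; at \<open>s = tr\<close> it is also the
  \<open>t\<close>-derivative of \<open>t (1 - t\<^sup>2r\<^sup>2)\<^sup>-\<^sup>a / a\<close>.\<close>

definition cesaro_majorant :: "real \<Rightarrow> real \<Rightarrow> real" where
  "cesaro_majorant a s = ((1 - s^2) powr (-a) + 2 * a * s^2 * (1 - s^2) powr (-a - 1)) / a"

lemma cesaro_kernel_le_majorant:
  fixes a s :: real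
  assumes "0 \<le> s" "s < 1" "0 < a" "a \<le> 1/2"
  shows "(1 - s^2) powr (-a) / (1 - s) \<le> cesaro_majorant a s"
proof -
  define q where "q = 1 - s^2"
  have q_factor: "q = (1 - s) * (1 + s)"
    unfolding q_def by (simp add: algebra_simps power2_eq_square)
  then have "0 < q"
    using assms by simp
  then have q_powr: "q powr (-a) = q * q powr (-a - 1)"
    using powr_add[of q 1 "-a - 1"] by simp
  have "0 \<le> (1 - 2 * a) * s + 1 - a"
    using assms mult_nonneg_nonneg[of "1 - 2 * a" s] by linarith
  then have "0 \<le> (1 - s) * ((1 - 2 * a) * s + 1 - a)"
    using assms by simp
  moreover have "q + 2 * a * s^2 - a * (1 + s) = (1 - s) * ((1 - 2 * a) * s + 1 - a)"
    unfolding q_def by (simp add: algebra_simps power2_eq_square)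
  ultimately have "a * (1 + s) \<le> q + 2 * a * s^2"
    by linarith
  then have "a * (1 + s) * q powr (-a - 1) \<le> (q + 2 * a * s^2) * q powr (-a - 1)"
    by (rule mult_right_mono) simp
  have "q / (1 - s) = 1 + s"
    using assms q_factor by simp
  then have "q powr (-a) / (1 - s) = (1 + s) * q powr (-a - 1)"
    unfolding q_powr by (metis times_divide_eq_left mult.commute)
  also have "\<dots> \<le> (q + 2 * a * s^2) * q powr (-a - 1) / a"
    using \<open>a * (1 + s) * q powr (-a - 1) \<le> _\<close> assms by (simp add: pos_le_divide_eq mult_ac)
  also have "\<dots> = cesaro_majorant a s"
    unfolding cesaro_majorant_def q_def[symmetric] q_powr by (simp add: algebra_simps)
  finally show ?thesis
    unfolding q_def .
qed

lemma has_integral_cesaro_majorant: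
  fixes a r :: real
  assumes "0 \<le> r" "r < 1" "0 < a"
  shows "((\<lambda>t. cesaro_majorant a (t * r)) has_integral (1 - r^2) powr (-a) / a) {0..1}"
proof -
  have "((\<lambda>t. t * (1 - (t * r)^2) powr (-a) / a) has_real_derivative cesaro_majorant a (t * r))
      (at t within {0..1})" if "t \<in> {0..1}" for t
  proof -
    have "0 \<le> t * r" "t * r < 1"
      using that assms mult_left_le_one_le[of r t] by auto
    then have "0 < 1 - (t * r)^2"
      by (simp add: power_less_one_iff)
    then show ?thesis
      using assms unfolding cesaro_majorant_def
      by (auto intro!: derivative_eq_intros simp: field_simps power2_eq_square)
  qed
  from fundamental_theorem_of_calculus[OF _ this[unfolded has_real_derivative_iff_has_vector_derivative]]
  show ?thesis
    by simp
qed

lemma korenblum_weighted_cesaro_le: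
  assumes "0 < a" "a \<le> 1/2" "in_korenblum a f" "z \<in> ball 0 1"
  shows "korenblum_weighted a (cesaro f) z \<le> korenblum_norm a f / a"
proof -
  define N where "N = korenblum_norm a f"
  define r where "r = cmod z"
  have r: "0 \<le> r" "r < 1"
    using assms(4) by (auto simp: r_def)
  have N: "0 \<le> N"
    unfolding N_def using korenblum_norm_nonneg[OF assms(3)] .
  have cont: "continuous_on (ball 0 1) f"
    using assms(3) holomorphic_on_imp_continuous_on unfolding in_korenblum_def by blast
  have majorant: "((\<lambda>t. N * cesaro_majorant a (t * r)) has_integral N * ((1 - r^2) powr (-a) / a)) {0..1}"
    using has_integral_cesaro_majorant[OF r assms(1)] by (rule has_integral_mult_right)
  have kernel: "cmod (f (of_real t * z) / (1 - of_real t * z)) \<le> N * cesaro_majorant a (t * r)"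
    if t: "t \<in> {0..1}" for t
  proof -
    have tz: "cmod (of_real t * z) = t * r"
      using t by (simp add: r_def norm_mult)
    have "t * r < 1" "0 \<le> t * r"
      using t r mult_left_le_one_le[of r t] by auto
    have "cmod (f (of_real t * z)) \<le> N * (1 - (t * r)^2) powr (-a)"
      using norm_le_korenblum_norm[OF assms(3) of_real_mult_mem_unit_ball[OF assms(4) t]] tz
      by (simp add: N_def)
    moreover have "1 - t * r \<le> cmod (1 - of_real t * z)"
      using norm_triangle_ineq2[of 1 "of_real t * z"] tz by simp
    ultimately have "cmod (f (of_real t * z) / (1 - of_real t * z))
        \<le> N * ((1 - (t * r)^2) powr (-a) / (1 - t * r))"
      using \<open>t * r < 1\<close> N by (simp add: norm_divide frac_le)
    also have "\<dots> \<le> N * cesaro_majorant a (t * r)"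
      using \<open>t * r < 1\<close> \<open>0 \<le> t * r\<close> assms N
      by (intro mult_left_mono cesaro_kernel_le_majorant) auto
    finally show ?thesis .
  qed
  have "cmod (cesaro f z) \<le> N * ((1 - r^2) powr (-a) / a)"
    unfolding cesaro_def integral_unique[OF majorant, symmetric]
    using kernel
    by (intro integral_norm_bound_integral has_integral_integrable[OF majorant]
        integrable_continuous_interval continuous_on_cesaro_integrand[OF cont assms(4)]) auto
  moreover have "0 < 1 - r^2"
    using r by (simp add: power_less_one_iff)
  ultimately have "(1 - r^2) powr a * cmod (cesaro f z) \<le> (1 - r^2) powr a * (N * ((1 - r^2) powr (-a) / a))"
    by (intro mult_left_mono) auto
  also have "\<dots> = N / a"
    using \<open>0 < 1 - r^2\<close> by (simp add: powr_minus field_simps)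
  finally show ?thesis
    by (simp add: korenblum_weighted_def r_def N_def)
qed

lemma korenblum_cesaro:
  assumes "0 < a" "a \<le> 1/2" "in_korenblum a f"
  shows "in_korenblum a (cesaro f)" "korenblum_norm a (cesaro f) \<le> korenblum_norm a f / a"
  using assms holomorphic_on_cesaro korenblum_weighted_cesaro_le in_korenblum_norm_leI
  unfolding in_korenblum_def by metis+

definition korenblum_test :: "real \<Rightarrow> complex \<Rightarrow> complex" where
  "korenblum_test a z = (2 - 2 * z) powr of_real (-a)"

lemma holomorphic_korenblum_test: "korenblum_test a holomorphic_on ball 0 1"
proof -
  have "2 - 2 * z \<notin> \<real>\<^sub>\<le>\<^sub>0" if "z \<in> ball 0 1" for z :: complex
    using that abs_Re_le_cmod[of z] by (auto simp: complex_nonpos_Reals_iff)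
  then show ?thesis
    unfolding korenblum_test_def[abs_def] by (intro holomorphic_intros) simp_all
qed

lemma korenblum_weighted_test_le_1:
  assumes "0 \<le> a" "z \<in> ball 0 1"
  shows "korenblum_weighted a (korenblum_test a) z \<le> 1"
proof -
  define u where "u = cmod (2 - 2 * z)"
  have "0 \<le> (1 - cmod z)^2"
    by simp
  then have "1 - (cmod z)^2 \<le> 2 * (1 - cmod z)"
    by (simp add: power2_eq_square algebra_simps)
  also have "\<dots> \<le> u"
    using norm_triangle_ineq2[of 1 z] norm_mult[of 2 "1 - z"] by (simp add: u_def algebra_simps)
  finally have "1 - (cmod z)^2 \<le> u" .
  moreover have "0 < 1 - (cmod z)^2"
    using assms(2) by (simp add: power_less_one_iff)
  ultimately have "(1 - (cmod z)^2) powr a * u powr (-a) \<le> u powr a * u powr (-a)"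
    using assms(1) by (intro mult_right_mono powr_mono2) auto
  also have "\<dots> = 1"
    using \<open>0 < 1 - (cmod z)^2\<close> \<open>1 - (cmod z)^2 \<le> u\<close> by (simp add: powr_add[symmetric])
  finally show ?thesis
    by (simp add: korenblum_weighted_def korenblum_test_def u_def norm_powr_real_powr')
qed

lemma in_korenblum_test:
  assumes "0 \<le> a"
  shows "in_korenblum a (korenblum_test a)" "korenblum_norm a (korenblum_test a) \<le> 1"
  using in_korenblum_norm_leI[OF holomorphic_korenblum_test korenblum_weighted_test_le_1[OF assms]]
  by auto

lemma cesaro_korenblum_test_of_real:
  assumes "0 < a" "0 < r" "r < 1"
  shows "cesaro (korenblum_test a) (of_real r)
       = of_real (((2 - 2 * r) powr (-a) - 2 powr (-a)) / (a * r))"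
proof -
  have pos: "0 < 1 - t * r" if "t \<in> {0..1}" for t
  proof -
    have "t * r \<le> r"
      using that assms by (intro mult_left_le_one_le) auto
    then show ?thesis
      using assms by linarith
  qed
  have "((\<lambda>t. (2 - 2 * (t * r)) powr (-a) / (a * r)) has_real_derivative
      (2 - 2 * (t * r)) powr (-a) / (1 - t * r)) (at t within {0..1})" if "t \<in> {0..1}" for t
    using assms pos[OF that]
    by (auto intro!: derivative_eq_intros simp: powr_diff field_simps)
  from fundamental_theorem_of_calculus[OF _ this[unfolded has_real_derivative_iff_has_vector_derivative]]
  have real_integral: "((\<lambda>t. (2 - 2 * (t * r)) powr (-a) / (1 - t * r)) has_integral
      ((2 - 2 * r) powr (-a) - 2 powr (-a)) / (a * r)) {0..1}"
    by (simp add: diff_divide_distrib)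
  have integrand: "korenblum_test a (of_real t * of_real r) / (1 - of_real t * of_real r)
      = of_real ((2 - 2 * (t * r)) powr (-a) / (1 - t * r))" if "t \<in> {0..1}" for t
    using pos[OF that] by (simp add: korenblum_test_def powr_of_real[symmetric])
  have "((\<lambda>t. korenblum_test a (of_real t * of_real r) / (1 - of_real t * of_real r))
      has_integral of_real (((2 - 2 * r) powr (-a) - 2 powr (-a)) / (a * r))) {0..1}"
    by (rule has_integral_eq[OF _ has_integral_of_real[OF real_integral]]) (simp add: integrand)
  then show ?thesis
    unfolding cesaro_def by (rule integral_unique)
qed

lemma korenblum_norm_cesaro_test_ge:
  assumes "0 < a" "a \<le> 1/2"
  shows "1 / a \<le> korenblum_norm a (cesaro (korenblum_test a))"
proof (rule tendsto_upperbound)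
  show "((\<lambda>r. (1 - r^2) powr a * (((2 - 2 * r) powr (-a) - 2 powr (-a)) / (a * r))) \<longlongrightarrow> 1 / a)
      (at_left 1)"
    using assms(1) by real_asymp (simp add: powr_minus divide_inverse)
  have "in_korenblum a (cesaro (korenblum_test a))"
    using assms in_korenblum_test korenblum_cesaro by simp
  have "(1 - r^2) powr a * (((2 - 2 * r) powr (-a) - 2 powr (-a)) / (a * r))
      \<le> korenblum_norm a (cesaro (korenblum_test a))" if r: "r \<in> {0<..<1}" for r
  proof -
    from r have "0 < r" "r < 1"
      by auto
    define v where "v = ((2 - 2 * r) powr (-a) - 2 powr (-a)) / (a * r)"
    have "(1 - r^2) powr a * v \<le> (1 - r^2) powr a * \<bar>v\<bar>"
      by (intro mult_left_mono) auto
    also have "\<dots> = korenblum_weighted a (cesaro (korenblum_test a)) (of_real r)"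
      unfolding korenblum_weighted_def
        cesaro_korenblum_test_of_real[OF assms(1) \<open>0 < r\<close> \<open>r < 1\<close>] norm_of_real v_def
      by simp
    also have "\<dots> \<le> korenblum_norm a (cesaro (korenblum_test a))"
      using \<open>in_korenblum a (cesaro (korenblum_test a))\<close> r
      by (intro korenblum_weighted_le_norm) auto
    finally show ?thesis
      unfolding v_def .
  qed
  then show "\<forall>\<^sub>F r in at_left 1. (1 - r^2) powr a * (((2 - 2 * r) powr (-a) - 2 powr (-a)) / (a * r))
      \<le> korenblum_norm a (cesaro (korenblum_test a))"
    using eventually_at_left_real[of 0 1] by (auto elim: eventually_mono)
qed simp

theorem theorem3p1:
  fixes \<alpha> :: real
  assumes "0 < \<alpha>" and "\<alpha> \<le> 1/2"
  shows "(\<forall>f. in_korenblum \<alpha> f \<longrightarrow> in_korenblum \<alpha> (cesaro f))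
       \<and> bdd_above {korenblum_norm \<alpha> (cesaro f) | f. in_korenblum \<alpha> f \<and> korenblum_norm \<alpha> f \<le> 1}
       \<and> cesaro_norm_korenblum \<alpha> = 1 / \<alpha>"
proof -
  let ?S = "{korenblum_norm \<alpha> (cesaro f) | f. in_korenblum \<alpha> f \<and> korenblum_norm \<alpha> f \<le> 1}"
  have bounded: "\<forall>f. in_korenblum \<alpha> f \<longrightarrow> in_korenblum \<alpha> (cesaro f)"
    using korenblum_cesaro(1)[OF assms] by blast
  have upper: "x \<le> 1 / \<alpha>" if "x \<in> ?S" for x
  proof -
    from that obtain f where f: "in_korenblum \<alpha> f" "korenblum_norm \<alpha> f \<le> 1"
      and x: "x = korenblum_norm \<alpha> (cesaro f)"
      by blast
    have "x \<le> korenblum_norm \<alpha> f / \<alpha>"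
      using korenblum_cesaro(2)[OF assms f(1)] x by simp
    also have "\<dots> \<le> 1 / \<alpha>"
      using f(2) assms(1) by (simp add: divide_right_mono)
    finally show ?thesis .
  qed
  have test: "korenblum_norm \<alpha> (cesaro (korenblum_test \<alpha>)) \<in> ?S"
    using in_korenblum_test[OF less_imp_le[OF assms(1)]] by blast
  have "korenblum_norm \<alpha> (cesaro (korenblum_test \<alpha>)) = 1 / \<alpha>"
    using upper[OF test] korenblum_norm_cesaro_test_ge[OF assms] by linarith
  with test have "Sup ?S = 1 / \<alpha>"
    using upper by (intro cSup_eq_maximum) auto
  moreover have "bdd_above ?S"
    using upper by (rule bdd_aboveI)
  ultimately show ?thesis
    unfolding cesaro_norm_korenblum_def using bounded by simp
qed

end
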